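(* Let $w\in G(e,e,n)$ and for $1\le i\le n$ let $c_i$ be the column with $a_i:=w[i,c_i]\neq 0$. (1) Let $n\ge 3$ and $3\le i\le n$. (a) If $c_{i-1}<c_i$, then $\ell(s_iw)=\ell(w)-1$ if and only if $a_i\neq 1$. (b) If $c_{i-1}>c_i$, then $\ell(s_iw)=\ell(w)-1$ if and only if $a_{i-1}=1$. (2) If $c_1<c_2$, then for every $0\le k\le e-1$: $\ell(t_kw)=\ell(w)-1$ if and only if $a_2\neq 1$. (3) If $c_1>c_2$, then for every $0\le k\le e-1$: $\ell(t_kw)=\ell(w)-1$ if and only if $a_1=\zeta_e^{-k}$.
   Context: Let $e\ge 2$, $n\ge 2$, $\zeta_e=e^{2\pi i/e}$. $G(e,e,n)$ is the group of $n\times n$ monomial matrices with nonzero entries $e$-th roots of unity whose product is $1$; $w[i,c]$ is the $(i,c)$ entry. For $i\in\mathbb{Z}/e\mathbb{Z}$, $t_i$ is the matrix with $(1,2)$ entry $\zeta_e^{-i}$, $(2,1)$ entry $\zeta_e^{i}$, $(j,j)$ entry $1$ for $3\le j\le n$, other entries $0$; for $3\le j\le n$, $s_j$ is the permutation matrix of the transposition $(j-1\ j)$. $X=\{t_0,\dots,t_{e-1},s_3,\dots,s_n\}$ and $\ell$ is the word length with respect to $X$. *)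

theory Defs
  imports Complex_Main "HOL-Combinatorics.Permutations"
begin

text \<open>Matrices of size n are represented as functions nat \<Rightarrow> nat \<Rightarrow> complex,
  indexed by {1..n}, and zero outside {1..n} x {1..n}.\<close>

type_synonym cmat = "nat \<Rightarrow> nat \<Rightarrow> complex"

definition zeta :: "nat \<Rightarrow> complex" where
  "zeta e = cis (2 * pi / real e)"

definition mmult :: "nat \<Rightarrow> cmat \<Rightarrow> cmat \<Rightarrow> cmat" where
  "mmult n A B = (\<lambda>i j. if i \<in> {1..n} \<and> j \<in> {1..n}
                         then (\<Sum>k\<in>{1..n}. A i k * B k j) else 0)"

definition idmat :: "nat \<Rightarrow> cmat" where
  "idmat n = (\<lambda>i j. if i \<in> {1..n} \<and> i = j then 1 else 0)"

definition Geen :: "nat \<Rightarrow> nat \<Rightarrow> cmat set" where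
  "Geen e n = {M. \<exists>\<sigma> a. \<sigma> permutes {1..n} \<and>
       (\<forall>i\<in>{1..n}. a i ^ e = 1) \<and> (\<Prod>i\<in>{1..n}. a i) = 1 \<and>
       (\<forall>i j. M i j = (if i \<in> {1..n} \<and> j = \<sigma> i then a i else 0))}"

definition tgen :: "nat \<Rightarrow> nat \<Rightarrow> nat \<Rightarrow> cmat" where
  "tgen e n k = (\<lambda>i j.
      if i = 1 \<and> j = 2 then inverse (zeta e ^ k)
      else if i = 2 \<and> j = 1 then zeta e ^ k
      else if 3 \<le> i \<and> i \<le> n \<and> i = j then 1 else 0)"

definition sgen :: "nat \<Rightarrow> nat \<Rightarrow> cmat" where
  "sgen n j = (\<lambda>a b. if a \<in> {1..n} \<and>
      b = (if a = j - 1 then j else if a = j then j - 1 else a) then 1 else 0)"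

definition gens :: "nat \<Rightarrow> nat \<Rightarrow> cmat set" where
  "gens e n = {tgen e n k | k. k < e} \<union> {sgen n j | j. 3 \<le> j \<and> j \<le> n}"

definition wprod :: "nat \<Rightarrow> cmat list \<Rightarrow> cmat" where
  "wprod n ws = foldr (mmult n) ws (idmat n)"

definition wlen :: "nat \<Rightarrow> nat \<Rightarrow> cmat \<Rightarrow> nat" where
  "wlen e n w = (LEAST m. \<exists>ws. length ws = m \<and> set ws \<subseteq> gens e n \<and> wprod n ws = w)"

end

theory Submission
  imports Defs
begin

(* Write an element of G(e,e,n) as the monomial matrix with entry a i at (i, \<sigma> i), and let
   row i contribute #{j > i. \<sigma> j < \<sigma> i} if a i = 1 and \<sigma> i - 1 + #{j < i. \<sigma> j < \<sigma> i} otherwise.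
   Left multiplication by s_i or t_k swaps two adjacent rows (t_k also rescales them), and a
   direct count shows that the sum of these contributions changes by exactly +1 or -1, with the
   sign given by the three criteria of the theorem.  Hence the sum is a lower bound for the word
   length.  Conversely every non-identity element admits a generator lowering the sum: if no
   generator does, the columns increase from row to row and all entries are 1.  So the sum is
   the word length, and the criteria follow. *)

section \<open>Monomial matrices\<close>

definition monomial_mat :: "nat \<Rightarrow> (nat \<Rightarrow> nat) \<Rightarrow> (nat \<Rightarrow> complex) \<Rightarrow> cmat" where
  "monomial_mat n \<sigma> a = (\<lambda>i j. if i \<in> {1..n} \<and> j = \<sigma> i then a i else 0)"

definition Geen_data :: "nat \<Rightarrow> nat \<Rightarrow> (nat \<Rightarrow> nat) \<Rightarrow> (nat \<Rightarrow> complex) \<Rightarrow> bool" where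
  "Geen_data e n \<sigma> a \<longleftrightarrow>
     \<sigma> permutes {1..n} \<and> (\<forall>i\<in>{1..n}. a i ^ e = 1) \<and> (\<Prod>i\<in>{1..n}. a i) = 1"

lemma Geen_eq: "Geen e n = {monomial_mat n \<sigma> a | \<sigma> a. Geen_data e n \<sigma> a}"
  unfolding Geen_def Geen_data_def monomial_mat_def by (auto simp: fun_eq_iff)

lemma mmult_monomial_mat:
  assumes "\<forall>i\<in>{1..n}. \<tau> i \<in> {1..n}" and "\<forall>i\<in>{1..n}. \<sigma> i \<in> {1..n}"
  shows "mmult n (monomial_mat n \<tau> d) (monomial_mat n \<sigma> a)
           = monomial_mat n (\<sigma> \<circ> \<tau>) (\<lambda>i. d i * a (\<tau> i))"
proof (intro ext)
  fix i j
  show "mmult n (monomial_mat n \<tau> d) (monomial_mat n \<sigma> a) i j = monomial_mat n (\<sigma> \<circ> \<tau>) (\<lambda>i. d i * a (\<tau> i)) i j"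
  proof (cases "i \<in> {1..n} \<and> j \<in> {1..n}")
    case True
    have "(\<Sum>k\<in>{1..n}. monomial_mat n \<tau> d i k * monomial_mat n \<sigma> a k j)
        = (\<Sum>k\<in>{1..n}. if k = \<tau> i then d i * (if j = \<sigma> k then a k else 0) else 0)"
      using True by (intro sum.cong) (auto simp: monomial_mat_def)
    also have "\<dots> = d i * (if j = \<sigma> (\<tau> i) then a (\<tau> i) else 0)"
      using assms True by simp
    finally show ?thesis
      using True by (simp add: mmult_def monomial_mat_def)
  qed (use assms in \<open>auto simp: mmult_def monomial_mat_def\<close>)
qed

lemma monomial_mat_eqD:
  assumes "monomial_mat n \<sigma> a = monomial_mat n \<sigma>' a'" and "i \<in> {1..n}" and "a i \<noteq> 0"
  shows "\<sigma>' i = \<sigma> i \<and> a' i = a i"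
proof -
  have "monomial_mat n \<sigma> a i (\<sigma> i) = monomial_mat n \<sigma>' a' i (\<sigma> i)"
    using assms(1) by simp
  with assms(2,3) show ?thesis
    by (auto simp: monomial_mat_def split: if_splits)
qed

lemma monomial_mat_eq_idmat:
  "\<forall>i\<in>{1..n}. \<sigma> i = i \<and> a i = 1 \<Longrightarrow> monomial_mat n \<sigma> a = idmat n"
  by (auto simp: idmat_def monomial_mat_def fun_eq_iff)

lemma sgen_eq: "sgen n i = monomial_mat n (transpose (i - 1) i) (\<lambda>_. 1)"
  by (simp add: sgen_def monomial_mat_def transpose_def fun_eq_iff)

definition tgen_diag :: "nat \<Rightarrow> nat \<Rightarrow> nat \<Rightarrow> complex" where
  "tgen_diag e k i = (if i = 1 then inverse (zeta e ^ k) else if i = 2 then zeta e ^ k else 1)"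

lemma tgen_eq: "2 \<le> n \<Longrightarrow> tgen e n k = monomial_mat n (transpose 1 2) (tgen_diag e k)"
  by (auto simp: tgen_def monomial_mat_def tgen_diag_def transpose_def fun_eq_iff)

lemma zeta_nonzero [simp]: "zeta e \<noteq> 0"
  by (simp add: zeta_def)

lemma zeta_power_eq_1: "0 < e \<Longrightarrow> zeta e ^ e = 1"
  by (simp add: zeta_def DeMoivre complex_eq_iff)

lemma root_of_unity_eq_inverse_zeta_power:
  assumes "0 < e" and "x ^ e = (1::complex)"
  obtains k where "k < e" and "x = inverse (zeta e ^ k)"
proof -
  have "inverse x ^ e = 1"
    using assms by (simp add: power_inverse)
  then obtain k where k: "k < e" "inverse x = cis (2 * pi * real k / real e)"
    using bij_betw_roots_unity[OF assms(1)] unfolding bij_betw_def by auto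
  have "zeta e ^ k = cis (2 * pi * real k / real e)"
    by (simp add: zeta_def DeMoivre mult_ac)
  with k that show ?thesis
    by (metis inverse_inverse_eq)
qed

section \<open>Left multiplication by the generators\<close>

definition tgen_coeffs :: "nat \<Rightarrow> nat \<Rightarrow> (nat \<Rightarrow> complex) \<Rightarrow> nat \<Rightarrow> complex" where
  "tgen_coeffs e k a = (\<lambda>i. tgen_diag e k i * a (transpose 1 2 i))"

lemma tgen_coeffs_tgen_coeffs [simp]: "tgen_coeffs e k (tgen_coeffs e k a) = a"
  by (auto simp: tgen_coeffs_def tgen_diag_def fun_eq_iff transpose_def)

lemma permutes_interval_maps_to:
  "\<sigma> permutes {1..n} \<Longrightarrow> \<forall>i\<in>{1..n}. \<sigma> i \<in> {1..n}"
  by (meson permutes_in_image)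

lemma sgen_mult_monomial_mat:
  assumes "2 \<le> i" "i \<le> n" and "\<sigma> permutes {1..n}"
  shows "mmult n (sgen n i) (monomial_mat n \<sigma> a)
           = monomial_mat n (\<sigma> \<circ> transpose (i - 1) i) (a \<circ> transpose (i - 1) i)"
proof -
  have "transpose (i - 1) i permutes {1..n}"
    using assms by (intro permutes_swap_id) auto
  from mmult_monomial_mat[OF permutes_interval_maps_to[OF this]
      permutes_interval_maps_to[OF assms(3)], of "\<lambda>_. 1" a]
  show ?thesis by (simp add: sgen_eq comp_def)
qed

lemma tgen_mult_monomial_mat:
  assumes "2 \<le> n" and "\<sigma> permutes {1..n}"
  shows "mmult n (tgen e n k) (monomial_mat n \<sigma> a)
           = monomial_mat n (\<sigma> \<circ> transpose 1 2) (tgen_coeffs e k a)"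
proof -
  have "transpose 1 2 permutes {1..n}"
    using assms by (intro permutes_swap_id) auto
  from mmult_monomial_mat[OF permutes_interval_maps_to[OF this]
      permutes_interval_maps_to[OF assms(2)], of "tgen_diag e k" a]
  show ?thesis using assms(1) by (simp add: tgen_eq tgen_coeffs_def)
qed

lemma gens_cases [consumes 1, case_names tgen sgen]:
  assumes "x \<in> gens e n"
  obtains (tgen) k where "k < e" "x = tgen e n k"
    | (sgen) i where "3 \<le> i" "i \<le> n" "x = sgen n i"
  using assms by (auto simp: gens_def)

lemma gen_mult_gen_mult_monomial_mat:
  assumes "2 \<le> n" and "x \<in> gens e n" and "\<sigma> permutes {1..n}"
  shows "mmult n x (mmult n x (monomial_mat n \<sigma> a)) = monomial_mat n \<sigma> a"
  using assms(2)
proof (cases rule: gens_cases)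
  case (tgen k)
  have "\<sigma> \<circ> transpose 1 2 permutes {1..n}"
    using assms by (intro permutes_compose permutes_swap_id) auto
  then show ?thesis
    using assms by (simp add: tgen tgen_mult_monomial_mat comp_assoc)
next
  case (sgen i)
  have "\<sigma> \<circ> transpose (i - 1) i permutes {1..n}"
    using assms sgen by (intro permutes_compose permutes_swap_id) auto
  then show ?thesis
    using assms sgen by (simp add: sgen_mult_monomial_mat comp_assoc)
qed

lemma Geen_data_comp_transpose:
  assumes "Geen_data e n \<sigma> a" and "p \<in> {1..n}" "q \<in> {1..n}"
  shows "Geen_data e n (\<sigma> \<circ> transpose p q) (a \<circ> transpose p q)"
proof -
  have \<tau>: "transpose p q permutes {1..n}"
    using assms(2,3) by (rule permutes_swap_id)
  have "(\<Prod>i\<in>{1..n}. a (transpose p q i)) = (\<Prod>i\<in>{1..n}. a i)"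
    using prod.permute[OF \<tau>, of a] by (simp add: comp_def)
  moreover have "\<sigma> \<circ> transpose p q permutes {1..n}"
    using assms(1) \<tau> unfolding Geen_data_def by (blast intro: permutes_compose)
  moreover have "\<forall>i\<in>{1..n}. a (transpose p q i) ^ e = 1"
    using assms(1) permutes_interval_maps_to[OF \<tau>] unfolding Geen_data_def by blast
  ultimately show ?thesis
    using assms(1) unfolding Geen_data_def by simp
qed

lemma Geen_data_rescale:
  assumes "Geen_data e n \<sigma> a" and "\<forall>i\<in>{1..n}. d i ^ e = 1" and "(\<Prod>i\<in>{1..n}. d i) = 1"
  shows "Geen_data e n \<sigma> (\<lambda>i. d i * a i)"
  using assms by (simp add: Geen_data_def power_mult_distrib prod.distrib)

lemma tgen_diag_power_eq_1:
  assumes "0 < e"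
  shows "tgen_diag e k i ^ e = 1"
proof -
  have "(zeta e ^ k) ^ e = 1"
    using zeta_power_eq_1[OF assms] by (metis mult.commute power_mult power_one)
  then show ?thesis
    by (simp add: tgen_diag_def power_inverse)
qed

lemma prod_tgen_diag: "2 \<le> n \<Longrightarrow> (\<Prod>i\<in>{1..n}. tgen_diag e k i) = 1"
proof -
  assume "2 \<le> n"
  then have "{1..n} = insert 1 (insert 2 {3..n})" by auto
  moreover have "(\<Prod>i\<in>{3..n}. tgen_diag e k i) = 1"
    by (intro prod.neutral) (auto simp: tgen_diag_def)
  ultimately show ?thesis
    by (simp add: tgen_diag_def)
qed

lemma Geen_data_tgen:
  assumes "0 < e" "2 \<le> n" and "Geen_data e n \<sigma> a"
  shows "Geen_data e n (\<sigma> \<circ> transpose 1 2) (tgen_coeffs e k a)"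
  using Geen_data_rescale[OF Geen_data_comp_transpose[OF assms(3)]]
    tgen_diag_power_eq_1[OF assms(1)] prod_tgen_diag[OF assms(2)] assms(2)
  unfolding tgen_coeffs_def by (simp add: comp_def)

section \<open>The length formula\<close>

definition row_len :: "nat \<Rightarrow> (nat \<Rightarrow> nat) \<Rightarrow> (nat \<Rightarrow> complex) \<Rightarrow> nat \<Rightarrow> int" where
  "row_len n \<sigma> a r =
     (if a r = 1 then int (card {j\<in>{r<..n}. \<sigma> j < \<sigma> r})
      else int (\<sigma> r) - 1 + int (card {j\<in>{1..<r}. \<sigma> j < \<sigma> r}))"

definition len_formula :: "nat \<Rightarrow> (nat \<Rightarrow> nat) \<Rightarrow> (nat \<Rightarrow> complex) \<Rightarrow> int" where
  "len_formula n \<sigma> a = (\<Sum>r\<in>{1..n}. row_len n \<sigma> a r)"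

lemma card_filter_transpose:
  assumes "finite S" and "p \<in> S \<longleftrightarrow> q \<in> S"
  shows "card {j\<in>S. P (transpose p q j)} = card {j\<in>S. P j}"
proof -
  have "transpose p q ` S = S"
    using assms(2) by simp
  then have "{j\<in>S. P (transpose p q j)} = transpose p q ` {j\<in>S. P j}"
    by (auto simp: image_iff) (metis imageI transpose_involutory)
  then show ?thesis
    by (simp add: card_image)
qed

lemma card_filter_insert:
  assumes "finite S" and "x \<notin> S"
  shows "card {j\<in>insert x S. P j} = card {j\<in>S. P j} + (if P x then 1 else 0)"
proof -
  have "{j\<in>insert x S. P j} = (if P x then insert x {j\<in>S. P j} else {j\<in>S. P j})"
    by auto
  then show ?thesis
    using assms by simp
qed

lemma card_less_permutes:
  assumes "\<sigma> permutes {1..n}" and "v \<in> {1..n}"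
  shows "card {j\<in>{1..n}. \<sigma> j < v} = v - 1"
proof -
  have "\<sigma> ` {j\<in>{1..n}. \<sigma> j < v} = {y\<in>\<sigma> ` {1..n}. y < v}"
    by auto
  also have "\<dots> = {1..<v}"
    using assms permutes_image[OF assms(1)] by auto
  finally have "\<sigma> ` {j\<in>{1..n}. \<sigma> j < v} = {1..<v}" .
  moreover have "inj_on \<sigma> {j\<in>{1..n}. \<sigma> j < v}"
    using permutes_inj_on[OF assms(1)] by (auto intro: inj_on_subset)
  ultimately show ?thesis
    by (metis card_atLeastLessThan card_image)
qed

lemma row_len_comp_transpose:
  assumes "p \<in> {r<..n} \<longleftrightarrow> q \<in> {r<..n}" "p \<in> {1..<r} \<longleftrightarrow> q \<in> {1..<r}"
    and "r \<noteq> p" "r \<noteq> q" "a' r = a r"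
  shows "row_len n (\<sigma> \<circ> transpose p q) a' r = row_len n \<sigma> a r"
  using card_filter_transpose[of "{r<..n}" p q "\<lambda>j. \<sigma> j < \<sigma> r"]
    card_filter_transpose[of "{1..<r}" p q "\<lambda>j. \<sigma> j < \<sigma> r"] assms
  by (simp add: row_len_def)

lemma sum_remove_two:
  assumes "finite S" "p \<in> S" "q \<in> S" "p \<noteq> q"
  shows "sum f S = f p + f q + sum f (S - {p} - {q})"
  using assms by (simp add: sum.remove[of S p] sum.remove[of "S - {p}" q] add.assoc)

lemma len_formula_swap_ascending:
  assumes i: "2 \<le> i" "i \<le> n" and asc: "\<sigma> (i - 1) < \<sigma> i"
  shows "len_formula n (\<sigma> \<circ> transpose (i - 1) i) (a \<circ> transpose (i - 1) i)
           = len_formula n \<sigma> a + (if a i = 1 then 1 else -1)"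
proof -
  let ?\<sigma> = "\<sigma> \<circ> transpose (i - 1) i" and ?a = "a \<circ> transpose (i - 1) i"
  let ?R = "{1..n} - {i - 1} - {i}"
  have split: "sum f {1..n} = f (i - 1) + f i + sum f ?R" for f
    using i by (intro sum_remove_two) auto
  have rest: "sum (row_len n ?\<sigma> ?a) ?R = sum (row_len n \<sigma> a) ?R"
    using i by (intro sum.cong refl row_len_comp_transpose) auto
  define U where "U v = card {j\<in>{i<..n}. \<sigma> j < v}" for v
  define L where "L v = card {j\<in>{1..<i - 1}. \<sigma> j < v}" for v
  have U': "card {j\<in>{i<..n}. ?\<sigma> j < v} = U v" for v
    unfolding U_def by (intro arg_cong[where f=card]) auto
  have L': "card {j\<in>{1..<i - 1}. ?\<sigma> j < v} = L v" for v
    unfolding L_def by (intro arg_cong[where f=card]) auto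
  have ivls: "{i - 1<..n} = insert i {i<..n}" "{1..<i} = insert (i - 1) {1..<i - 1}"
    using i by auto
  have above: "card {j\<in>{i - 1<..n}. g j < v} = card {j\<in>{i<..n}. g j < v} + (if g i < v then 1 else 0)"
    for g :: "nat \<Rightarrow> nat" and v
    unfolding ivls(1) by (rule card_filter_insert) auto
  have below: "card {j\<in>{1..<i}. g j < v} = card {j\<in>{1..<i - 1}. g j < v} + (if g (i - 1) < v then 1 else 0)"
    for g :: "nat \<Rightarrow> nat" and v
    unfolding ivls(2) by (rule card_filter_insert) auto
  have swapped: "?\<sigma> (i - 1) = \<sigma> i" "?\<sigma> i = \<sigma> (i - 1)" "?a (i - 1) = a i" "?a i = a (i - 1)"
    by auto
  have "row_len n \<sigma> a (i - 1)
      = (if a (i - 1) = 1 then int (U (\<sigma> (i - 1))) else int (\<sigma> (i - 1)) - 1 + int (L (\<sigma> (i - 1))))"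
    unfolding row_len_def using asc above[of \<sigma> "\<sigma> (i - 1)"] by (simp add: U_def L_def)
  moreover have "row_len n \<sigma> a i = (if a i = 1 then int (U (\<sigma> i)) else int (\<sigma> i) + int (L (\<sigma> i)))"
    unfolding row_len_def using asc below[of \<sigma> "\<sigma> i"] by (simp add: U_def L_def)
  moreover have "row_len n ?\<sigma> ?a (i - 1)
      = (if a i = 1 then int (U (\<sigma> i)) + 1 else int (\<sigma> i) - 1 + int (L (\<sigma> i)))"
    unfolding row_len_def using asc above[of ?\<sigma> "\<sigma> i"] U' L' by (simp only: swapped) simp
  moreover have "row_len n ?\<sigma> ?a i
      = (if a (i - 1) = 1 then int (U (\<sigma> (i - 1))) else int (\<sigma> (i - 1)) - 1 + int (L (\<sigma> (i - 1))))"
    unfolding row_len_def using asc below[of ?\<sigma> "\<sigma> (i - 1)"] U' L' by (simp only: swapped) simp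
  ultimately show ?thesis
    unfolding len_formula_def split[of "row_len n ?\<sigma> ?a"] split[of "row_len n \<sigma> a"] rest by simp
qed

lemma card_less_beyond_rows_1_2:
  assumes \<sigma>: "\<sigma> permutes {1..n}" and n: "2 \<le> n" and asc: "\<sigma> 1 < \<sigma> 2"
  shows "int (card {j\<in>{2<..n}. \<sigma> j < \<sigma> 1}) = int (\<sigma> 1) - 1"
    and "int (card {j\<in>{2<..n}. \<sigma> j < \<sigma> 2}) = int (\<sigma> 2) - 2"
proof -
  have all: "card {j\<in>{1..n}. \<sigma> j < v}
      = card {j\<in>{2<..n}. \<sigma> j < v} + (if \<sigma> 2 < v then 1 else 0) + (if \<sigma> 1 < v then 1 else 0)" for v
  proof -
    have "card {j\<in>insert 2 {2<..n}. \<sigma> j < v} = card {j\<in>{2<..n}. \<sigma> j < v} + (if \<sigma> 2 < v then 1 else 0)"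
      by (rule card_filter_insert) auto
    moreover have "card {j\<in>insert 1 (insert 2 {2<..n}). \<sigma> j < v}
        = card {j\<in>insert 2 {2<..n}. \<sigma> j < v} + (if \<sigma> 1 < v then 1 else 0)"
      by (rule card_filter_insert) auto
    moreover have "{1..n} = insert 1 (insert 2 {2<..n})"
      using n by auto
    ultimately show ?thesis
      by simp
  qed
  have range: "\<sigma> 1 \<in> {1..n}" "\<sigma> 2 \<in> {1..n}"
    using permutes_in_image[OF \<sigma>] n by auto
  show "int (card {j\<in>{2<..n}. \<sigma> j < \<sigma> 1}) = int (\<sigma> 1) - 1"
    using all[of "\<sigma> 1"] card_less_permutes[OF \<sigma> range(1)] asc range by simp
  show "int (card {j\<in>{2<..n}. \<sigma> j < \<sigma> 2}) = int (\<sigma> 2) - 2"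
    using all[of "\<sigma> 2"] card_less_permutes[OF \<sigma> range(2)] asc range by simp
qed

lemma len_formula_swap12_ascending:
  assumes \<sigma>: "\<sigma> permutes {1..n}" and n: "2 \<le> n" and asc: "\<sigma> 1 < \<sigma> 2"
  shows "len_formula n (\<sigma> \<circ> transpose 1 2) (tgen_coeffs e k a)
           = len_formula n \<sigma> a + (if a 2 = 1 then 1 else -1)"
proof -
  let ?\<sigma> = "\<sigma> \<circ> transpose 1 2" and ?a = "tgen_coeffs e k a"
  let ?R = "{1..n} - {1} - {2}"
  have split: "sum f {1..n} = f 1 + f 2 + sum f ?R" for f
    using n by (intro sum_remove_two) auto
  have rest: "sum (row_len n ?\<sigma> ?a) ?R = sum (row_len n \<sigma> a) ?R"
    using n by (intro sum.cong refl row_len_comp_transpose) (auto simp: tgen_coeffs_def tgen_diag_def)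
  define U where "U v = card {j\<in>{2<..n}. \<sigma> j < v}" for v
  have U': "card {j\<in>{2<..n}. ?\<sigma> j < v} = U v" for v
    unfolding U_def by (intro arg_cong[where f=card]) auto
  have U1: "int (U (\<sigma> 1)) = int (\<sigma> 1) - 1" and U2: "int (U (\<sigma> 2)) = int (\<sigma> 2) - 2"
    unfolding U_def using card_less_beyond_rows_1_2[OF assms] by simp_all
  have "{1<..n} = insert 2 {2<..n}"
    using n by auto
  then have above: "card {j\<in>{1<..n}. g j < v} = card {j\<in>{2<..n}. g j < v} + (if g 2 < v then 1 else 0)"
    for g :: "nat \<Rightarrow> nat" and v
    by (simp only:) (rule card_filter_insert, auto)
  have swapped: "?\<sigma> 1 = \<sigma> 2" "?\<sigma> 2 = \<sigma> 1"
    by auto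
  have below: "{1..<(1::nat)} = {}" "{1..<(2::nat)} = {1}" "{j\<in>{1..<2}. \<sigma> j < \<sigma> 2} = {1}"
    using asc by auto
  have "row_len n \<sigma> a 1 = int (\<sigma> 1) - 1"
    unfolding row_len_def using asc above[of \<sigma> "\<sigma> 1"] U1 by (simp add: U_def below)
  moreover have "row_len n \<sigma> a 2 = (if a 2 = 1 then int (\<sigma> 2) - 2 else int (\<sigma> 2))"
    unfolding row_len_def below(3) using U2 by (simp add: U_def)
  moreover have "row_len n ?\<sigma> ?a 1 = int (\<sigma> 2) - 1"
    unfolding row_len_def using asc above[of ?\<sigma> "\<sigma> 2"] U'[of "\<sigma> 2"] U2
    by (simp only: swapped below) simp
  moreover have "row_len n ?\<sigma> ?a 2 = int (\<sigma> 1) - 1"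
    unfolding row_len_def using asc U'[of "\<sigma> 1"] U1 by (simp only: swapped below) simp
  ultimately show ?thesis
    unfolding len_formula_def split[of "row_len n ?\<sigma> ?a"] split[of "row_len n \<sigma> a"] rest by simp
qed

lemma len_formula_sgen:
  assumes "2 \<le> i" "i \<le> n" and \<sigma>: "\<sigma> permutes {1..n}"
  shows "len_formula n (\<sigma> \<circ> transpose (i - 1) i) (a \<circ> transpose (i - 1) i)
           = len_formula n \<sigma> a + (if \<sigma> (i - 1) < \<sigma> i then (if a i = 1 then 1 else -1)
                                 else if a (i - 1) = 1 then -1 else 1)"
proof (cases "\<sigma> (i - 1) < \<sigma> i")
  case True
  then show ?thesis
    using len_formula_swap_ascending[OF assms(1,2) True] by simp
next
  case False
  have "\<sigma> (i - 1) \<noteq> \<sigma> i"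
    using permutes_inj[OF \<sigma>] assms(1) by (simp add: inj_eq)
  with False have "(\<sigma> \<circ> transpose (i - 1) i) (i - 1) < (\<sigma> \<circ> transpose (i - 1) i) i"
    by simp
  moreover have "\<sigma> \<circ> transpose (i - 1) i \<circ> transpose (i - 1) i = \<sigma>"
    "a \<circ> transpose (i - 1) i \<circ> transpose (i - 1) i = a"
    by (simp_all add: fun_eq_iff)
  ultimately show ?thesis
    using len_formula_swap_ascending[OF assms(1,2), of "\<sigma> \<circ> transpose (i - 1) i" "a \<circ> transpose (i - 1) i"] False
    by auto
qed

lemma len_formula_tgen:
  assumes "2 \<le> n" and \<sigma>: "\<sigma> permutes {1..n}"
  shows "len_formula n (\<sigma> \<circ> transpose 1 2) (tgen_coeffs e k a)
           = len_formula n \<sigma> a + (if \<sigma> 1 < \<sigma> 2 then (if a 2 = 1 then 1 else -1)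
                                 else if a 1 = inverse (zeta e ^ k) then -1 else 1)"
proof (cases "\<sigma> 1 < \<sigma> 2")
  case True
  then show ?thesis
    using len_formula_swap12_ascending[OF \<sigma> assms(1) True] by simp
next
  case False
  have "\<sigma> 1 \<noteq> \<sigma> 2"
    using permutes_inj[OF \<sigma>] by (simp add: inj_eq)
  with False have "(\<sigma> \<circ> transpose 1 2) 1 < (\<sigma> \<circ> transpose 1 2) 2"
    by simp
  moreover have "\<sigma> \<circ> transpose 1 2 permutes {1..n}"
    using assms by (intro permutes_compose permutes_swap_id) auto
  moreover have "tgen_coeffs e k a 2 = 1 \<longleftrightarrow> a 1 = inverse (zeta e ^ k)"
    by (auto simp: tgen_coeffs_def tgen_diag_def field_simps)
  moreover have "\<sigma> \<circ> transpose 1 2 \<circ> transpose 1 2 = \<sigma>"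
    by (simp add: fun_eq_iff)
  ultimately show ?thesis
    using len_formula_swap12_ascending[of "\<sigma> \<circ> transpose 1 2" n e k "tgen_coeffs e k a"] assms(1) False
    by auto
qed

lemma len_formula_nonneg: "\<sigma> permutes {1..n} \<Longrightarrow> 0 \<le> len_formula n \<sigma> a"
  unfolding len_formula_def
proof (rule sum_nonneg)
  fix r assume "\<sigma> permutes {1..n}" "r \<in> {1..n}"
  then have "1 \<le> \<sigma> r"
    using permutes_in_image by fastforce
  then show "0 \<le> row_len n \<sigma> a r"
    by (simp add: row_len_def)
qed

lemma len_formula_cong:
  assumes "\<forall>i\<in>{1..n}. \<sigma> i = \<sigma>' i \<and> a i = a' i"
  shows "len_formula n \<sigma> a = len_formula n \<sigma>' a'"
  unfolding len_formula_def
proof (rule sum.cong[OF refl])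
  fix r assume r: "r \<in> {1..n}"
  have "{j\<in>{r<..n}. \<sigma> j < \<sigma> r} = {j\<in>{r<..n}. \<sigma>' j < \<sigma>' r}"
    "{j\<in>{1..<r}. \<sigma> j < \<sigma> r} = {j\<in>{1..<r}. \<sigma>' j < \<sigma>' r}"
    using assms r by auto
  with assms r show "row_len n \<sigma> a r = row_len n \<sigma>' a' r"
    by (simp add: row_len_def)
qed

lemma len_formula_eq_0:
  "\<forall>i\<in>{1..n}. \<sigma> i = i \<and> a i = 1 \<Longrightarrow> len_formula n \<sigma> a = 0"
  by (auto simp: len_formula_def row_len_def intro!: sum.neutral)

lemma permutes_ascending_eq_id:
  assumes \<sigma>: "\<sigma> permutes {1..n}" and asc: "\<And>i. i \<in> {1..<n} \<Longrightarrow> \<sigma> i < \<sigma> (Suc i)"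
  shows "\<sigma> i = i"
proof (cases "i \<in> {1..n}")
  case True
  have mono: "\<sigma> j < \<sigma> j'" if "1 \<le> j" "j < j'" "j' \<le> n" for j j'
    using lift_Suc_mono_less_ivl[of "{1..<n}" \<sigma> j j'] asc that by auto
  have "{j\<in>{1..n}. \<sigma> j < \<sigma> i} = {1..<i}"
  proof (intro set_eqI iffI)
    fix j assume j: "j \<in> {j\<in>{1..n}. \<sigma> j < \<sigma> i}"
    then have "\<not> i < j"
      using mono[of i j] True by auto
    with j show "j \<in> {1..<i}"
      by (cases "i = j") auto
  next
    fix j assume "j \<in> {1..<i}"
    then show "j \<in> {j\<in>{1..n}. \<sigma> j < \<sigma> i}"
      using mono[of j i] True by auto
  qed
  then have "i - 1 = \<sigma> i - 1"
    using card_less_permutes[OF \<sigma>, of "\<sigma> i"] permutes_in_image[OF \<sigma>] True by simp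
  moreover have "1 \<le> \<sigma> i"
    using permutes_in_image[OF \<sigma>] True by auto
  ultimately show ?thesis
    using True by auto
next
  case False
  then show ?thesis
    using \<sigma> by (simp add: permutes_not_in)
qed

lemma Geen_data_eq_id_if_no_descent:
  assumes data: "Geen_data e n \<sigma> a" and "\<sigma> 1 < \<sigma> 2" "a 2 = 1"
    and no_descent: "\<And>i. 3 \<le> i \<Longrightarrow> i \<le> n \<Longrightarrow>
          (\<sigma> (i - 1) < \<sigma> i \<longrightarrow> a i = 1) \<and> (\<sigma> i < \<sigma> (i - 1) \<longrightarrow> a (i - 1) \<noteq> 1)"
  shows "\<forall>i\<in>{1..n}. \<sigma> i = i \<and> a i = 1"
proof -
  have \<sigma>: "\<sigma> permutes {1..n}"
    using data by (simp add: Geen_data_def)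
  have ascent: "\<sigma> (i - 1) < \<sigma> i \<and> a i = 1" if "2 \<le> i" "i \<le> n" for i
    using that
  proof (induction i rule: nat_induct_at_least)
    case base
    then show ?case
      using assms(2,3) by simp
  next
    case (Suc i)
    have "\<sigma> i \<noteq> \<sigma> (Suc i)"
      using permutes_inj[OF \<sigma>] by (simp add: inj_eq)
    with no_descent[of "Suc i"] Suc show ?case
      by auto
  qed
  have "\<sigma> i < \<sigma> (Suc i)" if "i \<in> {1..<n}" for i
    using ascent[of "Suc i"] that by simp
  then have \<sigma>_id: "\<sigma> i = i" for i
    by (rule permutes_ascending_eq_id[OF \<sigma>])
  have "a i = 1" if "i \<in> {2..n}" for i
    using ascent that by auto
  moreover have "a 1 = 1" if "1 \<le> n"
  proof -
    have "{1..n} = insert 1 {2..n}"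
      using that by auto
    then have "(\<Prod>i\<in>{1..n}. a i) = a 1 * (\<Prod>i\<in>{2..n}. a i)"
      by simp
    with data calculation show ?thesis
      by (simp add: Geen_data_def)
  qed
  ultimately have "a i = 1" if "i \<in> {1..n}" for i
    using that by (cases "i = 1") auto
  with \<sigma>_id show ?thesis
    by blast
qed

section \<open>The word length\<close>

lemma gen_mult_monomial_mat:
  assumes "0 < e" "2 \<le> n" and data: "Geen_data e n \<sigma> a" and "x \<in> gens e n"
  obtains \<sigma>' a' where "mmult n x (monomial_mat n \<sigma> a) = monomial_mat n \<sigma>' a'"
    and "Geen_data e n \<sigma>' a'" and "len_formula n \<sigma>' a' \<le> len_formula n \<sigma> a + 1"
proof -
  have \<sigma>: "\<sigma> permutes {1..n}"
    using data by (simp add: Geen_data_def)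
  from assms(4) show ?thesis
  proof (cases rule: gens_cases)
    case (tgen k)
    show ?thesis
    proof (rule that)
      show "mmult n x (monomial_mat n \<sigma> a) = monomial_mat n (\<sigma> \<circ> transpose 1 2) (tgen_coeffs e k a)"
        unfolding tgen by (rule tgen_mult_monomial_mat[OF assms(2) \<sigma>])
      show "Geen_data e n (\<sigma> \<circ> transpose 1 2) (tgen_coeffs e k a)"
        by (rule Geen_data_tgen[OF assms(1,2) data])
      show "len_formula n (\<sigma> \<circ> transpose 1 2) (tgen_coeffs e k a) \<le> len_formula n \<sigma> a + 1"
        using len_formula_tgen[OF assms(2) \<sigma>, of e k a] by simp
    qed
  next
    case (sgen i)
    show ?thesis
    proof (rule that)
      show "mmult n x (monomial_mat n \<sigma> a)
          = monomial_mat n (\<sigma> \<circ> transpose (i - 1) i) (a \<circ> transpose (i - 1) i)"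
        unfolding sgen using sgen by (intro sgen_mult_monomial_mat[OF _ _ \<sigma>]) auto
      show "Geen_data e n (\<sigma> \<circ> transpose (i - 1) i) (a \<circ> transpose (i - 1) i)"
        using sgen by (intro Geen_data_comp_transpose[OF data]) auto
      show "len_formula n (\<sigma> \<circ> transpose (i - 1) i) (a \<circ> transpose (i - 1) i) \<le> len_formula n \<sigma> a + 1"
        using len_formula_sgen[OF _ _ \<sigma>, of i a] sgen by simp
    qed
  qed
qed

lemma len_formula_le_word_length:
  assumes "0 < e" "2 \<le> n"
  shows "set ws \<subseteq> gens e n \<Longrightarrow>
    \<exists>\<sigma> a. wprod n ws = monomial_mat n \<sigma> a \<and> Geen_data e n \<sigma> a \<and> len_formula n \<sigma> a \<le> int (length ws)"
proof (induction ws)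
  case Nil
  have "wprod n [] = monomial_mat n id (\<lambda>_. 1)" "Geen_data e n id (\<lambda>_. 1)"
    "len_formula n id (\<lambda>_. 1) = 0"
    by (simp_all add: wprod_def monomial_mat_eq_idmat len_formula_eq_0 Geen_data_def)
  then show ?case
    by (metis list.size(3) of_nat_0 order_refl)
next
  case (Cons x ws)
  then obtain \<sigma> a where IH: "wprod n ws = monomial_mat n \<sigma> a" "Geen_data e n \<sigma> a"
      "len_formula n \<sigma> a \<le> int (length ws)"
    by auto
  moreover obtain \<sigma>' a' where "mmult n x (monomial_mat n \<sigma> a) = monomial_mat n \<sigma>' a'"
    "Geen_data e n \<sigma>' a'" "len_formula n \<sigma>' a' \<le> len_formula n \<sigma> a + 1"
    using gen_mult_monomial_mat[of e n \<sigma> a x] assms IH(2) Cons.prems by auto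
  ultimately show ?case
    by (intro exI[of _ \<sigma>'] exI[of _ a']) (auto simp: wprod_def)
qed

lemma exists_descent:
  assumes "0 < e" "2 \<le> n" and data: "Geen_data e n \<sigma> a"
    and not_id: "\<not> (\<forall>i\<in>{1..n}. \<sigma> i = i \<and> a i = 1)"
  shows "(\<exists>k<e. (\<sigma> 1 < \<sigma> 2 \<and> a 2 \<noteq> 1) \<or> (\<sigma> 2 < \<sigma> 1 \<and> a 1 = inverse (zeta e ^ k)))
       \<or> (\<exists>i\<in>{3..n}. (\<sigma> (i - 1) < \<sigma> i \<and> a i \<noteq> 1) \<or> (\<sigma> i < \<sigma> (i - 1) \<and> a (i - 1) = 1))"
proof (cases "\<sigma> 1 < \<sigma> 2")
  case False
  have "\<sigma> 1 \<noteq> \<sigma> 2"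
    using data permutes_inj by (fastforce simp: Geen_data_def inj_eq)
  with False have "\<sigma> 2 < \<sigma> 1"
    by simp
  have "a 1 ^ e = 1"
    using data assms(2) by (simp add: Geen_data_def)
  then obtain k where "k < e" "a 1 = inverse (zeta e ^ k)"
    by (rule root_of_unity_eq_inverse_zeta_power[OF assms(1)])
  with \<open>\<sigma> 2 < \<sigma> 1\<close> show ?thesis
    by auto
next
  case asc: True
  show ?thesis
  proof (cases "a 2 = 1")
    case False
    then show ?thesis
      using asc assms(1) by auto
  next
    case True
    obtain i where "3 \<le> i" "i \<le> n"
      "\<not> ((\<sigma> (i - 1) < \<sigma> i \<longrightarrow> a i = 1) \<and> (\<sigma> i < \<sigma> (i - 1) \<longrightarrow> a (i - 1) \<noteq> 1))"
      using Geen_data_eq_id_if_no_descent[OF data asc True] not_id by blast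
    then show ?thesis
      by auto
  qed
qed

lemma exists_gen_decreasing_len_formula:
  assumes "0 < e" "2 \<le> n" and data: "Geen_data e n \<sigma> a"
    and not_id: "\<not> (\<forall>i\<in>{1..n}. \<sigma> i = i \<and> a i = 1)"
  obtains x \<sigma>' a' where "x \<in> gens e n" "mmult n x (monomial_mat n \<sigma> a) = monomial_mat n \<sigma>' a'"
    "Geen_data e n \<sigma>' a'" "len_formula n \<sigma>' a' = len_formula n \<sigma> a - 1"
proof -
  note descent = that
  have \<sigma>: "\<sigma> permutes {1..n}"
    using data by (simp add: Geen_data_def)
  have by_tgen: thesis if k: "k < e"
    and dec: "len_formula n (\<sigma> \<circ> transpose 1 2) (tgen_coeffs e k a) = len_formula n \<sigma> a - 1" for k
  proof (rule descent)
    show "tgen e n k \<in> gens e n"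
      using k by (auto simp: gens_def)
  qed (fact tgen_mult_monomial_mat[OF assms(2) \<sigma>] Geen_data_tgen[OF assms(1,2) data] dec)+
  have by_sgen: thesis if i: "3 \<le> i" "i \<le> n"
    and dec: "len_formula n (\<sigma> \<circ> transpose (i - 1) i) (a \<circ> transpose (i - 1) i) = len_formula n \<sigma> a - 1"
    for i
  proof (rule descent)
    show "sgen n i \<in> gens e n"
      using i by (auto simp: gens_def)
    show "mmult n (sgen n i) (monomial_mat n \<sigma> a)
        = monomial_mat n (\<sigma> \<circ> transpose (i - 1) i) (a \<circ> transpose (i - 1) i)"
      using i by (intro sgen_mult_monomial_mat[OF _ _ \<sigma>]) auto
    show "Geen_data e n (\<sigma> \<circ> transpose (i - 1) i) (a \<circ> transpose (i - 1) i)"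
      using i by (intro Geen_data_comp_transpose[OF data]) auto
  qed (fact dec)
  consider (tgen) k where "k < e" "(\<sigma> 1 < \<sigma> 2 \<and> a 2 \<noteq> 1) \<or> (\<sigma> 2 < \<sigma> 1 \<and> a 1 = inverse (zeta e ^ k))"
    | (sgen) i where "3 \<le> i" "i \<le> n"
        "(\<sigma> (i - 1) < \<sigma> i \<and> a i \<noteq> 1) \<or> (\<sigma> i < \<sigma> (i - 1) \<and> a (i - 1) = 1)"
    using exists_descent[OF assms(1,2) data not_id] by auto
  then show thesis
  proof cases
    case (tgen k)
    then show thesis
      using by_tgen[of k] len_formula_tgen[OF assms(2) \<sigma>, of e k a] by auto
  next
    case (sgen i)
    then show thesis
      using by_sgen[of i] len_formula_sgen[OF _ _ \<sigma>, of i a] by auto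
  qed
qed

lemma exists_word_of_len_formula:
  assumes "0 < e" "2 \<le> n"
  shows "Geen_data e n \<sigma> a \<Longrightarrow> len_formula n \<sigma> a = int m \<Longrightarrow>
    \<exists>ws. length ws = m \<and> set ws \<subseteq> gens e n \<and> wprod n ws = monomial_mat n \<sigma> a"
proof (induction m arbitrary: \<sigma> a)
  case 0
  show ?case
  proof (cases "\<forall>i\<in>{1..n}. \<sigma> i = i \<and> a i = 1")
    case True
    then show ?thesis
      by (intro exI[of _ "[]"]) (simp add: wprod_def monomial_mat_eq_idmat)
  next
    case False
    then obtain x \<sigma>' a' where "x \<in> gens e n" "mmult n x (monomial_mat n \<sigma> a) = monomial_mat n \<sigma>' a'"
      "Geen_data e n \<sigma>' a'" "len_formula n \<sigma>' a' = len_formula n \<sigma> a - 1"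
      by (rule exists_gen_decreasing_len_formula[OF assms "0.prems"(1)])
    then show ?thesis
      using len_formula_nonneg[of \<sigma>' n a'] "0.prems"(2) by (simp add: Geen_data_def)
  qed
next
  case (Suc m)
  have "\<not> (\<forall>i\<in>{1..n}. \<sigma> i = i \<and> a i = 1)"
    using len_formula_eq_0 Suc.prems(2) by force
  then obtain x \<sigma>' a' where x: "x \<in> gens e n" "mmult n x (monomial_mat n \<sigma> a) = monomial_mat n \<sigma>' a'"
    "Geen_data e n \<sigma>' a'" "len_formula n \<sigma>' a' = len_formula n \<sigma> a - 1"
    using exists_gen_decreasing_len_formula[OF assms Suc.prems(1)] by blast
  obtain ws where "length ws = m" "set ws \<subseteq> gens e n" "wprod n ws = monomial_mat n \<sigma>' a'"
    using Suc.IH[OF x(3)] x(4) Suc.prems(2) by auto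
  moreover have "mmult n x (monomial_mat n \<sigma>' a') = monomial_mat n \<sigma> a"
    using gen_mult_gen_mult_monomial_mat[OF assms(2) x(1), of \<sigma> a] x(2) Suc.prems(1)
    by (simp add: Geen_data_def)
  ultimately show ?case
    using x(1) by (intro exI[of _ "x # ws"]) (auto simp: wprod_def)
qed

lemma wlen_monomial_mat:
  assumes "0 < e" "2 \<le> n" and data: "Geen_data e n \<sigma> a"
  shows "int (wlen e n (monomial_mat n \<sigma> a)) = len_formula n \<sigma> a"
proof -
  obtain m where m: "len_formula n \<sigma> a = int m"
    using len_formula_nonneg[of \<sigma> n a] data nonneg_int_cases by (auto simp: Geen_data_def)
  have "wlen e n (monomial_mat n \<sigma> a) = m"
    unfolding wlen_def
  proof (rule Least_equality)
    show "\<exists>ws. length ws = m \<and> set ws \<subseteq> gens e n \<and> wprod n ws = monomial_mat n \<sigma> a"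
      by (rule exists_word_of_len_formula[OF assms(1,2) data m])
  next
    fix m' assume "\<exists>ws. length ws = m' \<and> set ws \<subseteq> gens e n \<and> wprod n ws = monomial_mat n \<sigma> a"
    then obtain ws where ws: "length ws = m'" "set ws \<subseteq> gens e n" "wprod n ws = monomial_mat n \<sigma> a"
      by blast
    then obtain \<sigma>' a' where \<sigma>': "wprod n ws = monomial_mat n \<sigma>' a'" "len_formula n \<sigma>' a' \<le> int m'"
      using len_formula_le_word_length[OF assms(1,2)] by blast
    have "a i \<noteq> 0" if "i \<in> {1..n}" for i
    proof -
      have "a i ^ e = 1"
        using data that by (simp add: Geen_data_def)
      then show ?thesis
        using assms(1) by (auto simp: power_0_left)
    qed
    then have "\<forall>i\<in>{1..n}. \<sigma> i = \<sigma>' i \<and> a i = a' i"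
      using monomial_mat_eqD[of n \<sigma> a \<sigma>' a'] ws(3) \<sigma>'(1) by auto
    then show "m \<le> m'"
      using len_formula_cong[of n \<sigma> \<sigma>' a a'] \<sigma>'(2) m by simp
  qed
  then show ?thesis
    using m by simp
qed

lemma wlen_sgen_mult:
  assumes "0 < e" "2 \<le> i" "i \<le> n" and data: "Geen_data e n \<sigma> a"
  shows "int (wlen e n (mmult n (sgen n i) (monomial_mat n \<sigma> a)))
           = int (wlen e n (monomial_mat n \<sigma> a))
             + (if \<sigma> (i - 1) < \<sigma> i then (if a i = 1 then 1 else -1)
                else if a (i - 1) = 1 then -1 else 1)"
proof -
  have \<sigma>: "\<sigma> permutes {1..n}"
    using data by (simp add: Geen_data_def)
  have "Geen_data e n (\<sigma> \<circ> transpose (i - 1) i) (a \<circ> transpose (i - 1) i)"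
    using assms(2,3) by (intro Geen_data_comp_transpose[OF data]) auto
  then show ?thesis
    using assms sgen_mult_monomial_mat[OF assms(2,3) \<sigma>] len_formula_sgen[OF assms(2,3) \<sigma>]
      wlen_monomial_mat[of e n] by simp
qed

lemma wlen_tgen_mult:
  assumes "0 < e" "2 \<le> n" and data: "Geen_data e n \<sigma> a"
  shows "int (wlen e n (mmult n (tgen e n k) (monomial_mat n \<sigma> a)))
           = int (wlen e n (monomial_mat n \<sigma> a))
             + (if \<sigma> 1 < \<sigma> 2 then (if a 2 = 1 then 1 else -1)
                else if a 1 = inverse (zeta e ^ k) then -1 else 1)"
proof -
  have \<sigma>: "\<sigma> permutes {1..n}"
    using data by (simp add: Geen_data_def)
  have "Geen_data e n (\<sigma> \<circ> transpose 1 2) (tgen_coeffs e k a)"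
    using assms by (intro Geen_data_tgen) auto
  then show ?thesis
    using assms tgen_mult_monomial_mat[OF assms(2) \<sigma>] len_formula_tgen[OF assms(2) \<sigma>]
      wlen_monomial_mat[of e n] by simp
qed

theorem mainTheorem3:
  fixes e n :: nat and w :: cmat and c :: "nat \<Rightarrow> nat" and a :: "nat \<Rightarrow> complex"
  assumes "e \<ge> 2" and "n \<ge> 2"
    and "w \<in> Geen e n"
    and "\<forall>i\<in>{1..n}. c i \<in> {1..n} \<and> w i (c i) \<noteq> 0"
    and "\<forall>i\<in>{1..n}. a i = w i (c i)"
  shows "(n \<ge> 3 \<longrightarrow> (\<forall>i\<in>{3..n}.
            (c (i - 1) < c i \<longrightarrow>
               (int (wlen e n (mmult n (sgen n i) w)) = int (wlen e n w) - 1 \<longleftrightarrow> a i \<noteq> 1)) \<and>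
            (c (i - 1) > c i \<longrightarrow>
               (int (wlen e n (mmult n (sgen n i) w)) = int (wlen e n w) - 1 \<longleftrightarrow> a (i - 1) = 1))))
       \<and> (c 1 < c 2 \<longrightarrow> (\<forall>k<e.
            int (wlen e n (mmult n (tgen e n k) w)) = int (wlen e n w) - 1 \<longleftrightarrow> a 2 \<noteq> 1))
       \<and> (c 1 > c 2 \<longrightarrow> (\<forall>k<e.
            int (wlen e n (mmult n (tgen e n k) w)) = int (wlen e n w) - 1 \<longleftrightarrow> a 1 = inverse (zeta e ^ k)))"
proof -
  have e: "0 < e"
    using assms(1) by simp
  obtain \<sigma> b where w: "w = monomial_mat n \<sigma> b" and data: "Geen_data e n \<sigma> b"
    using assms(3) by (auto simp: Geen_eq)
  have entries: "c i = \<sigma> i \<and> a i = b i" if "i \<in> {1..n}" for i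
    using assms(4,5) that by (auto simp: w monomial_mat_def split: if_splits)
  have "(c (i - 1) < c i \<longrightarrow> (int (wlen e n (mmult n (sgen n i) w)) = int (wlen e n w) - 1 \<longleftrightarrow> a i \<noteq> 1))
      \<and> (c (i - 1) > c i \<longrightarrow> (int (wlen e n (mmult n (sgen n i) w)) = int (wlen e n w) - 1 \<longleftrightarrow> a (i - 1) = 1))"
    if "i \<in> {3..n}" for i
  proof -
    have "i - 1 \<in> {1..n}" "i \<in> {1..n}"
      using that by auto
    then have "c (i - 1) = \<sigma> (i - 1)" "a (i - 1) = b (i - 1)" "c i = \<sigma> i" "a i = b i"
      using entries by blast+
    then show ?thesis
      using wlen_sgen_mult[OF e _ _ data, of i] that by (simp add: w)
  qed
  moreover have "(c 1 < c 2 \<longrightarrow> (int (wlen e n (mmult n (tgen e n k) w)) = int (wlen e n w) - 1 \<longleftrightarrow> a 2 \<noteq> 1))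
      \<and> (c 1 > c 2 \<longrightarrow> (int (wlen e n (mmult n (tgen e n k) w)) = int (wlen e n w) - 1
                             \<longleftrightarrow> a 1 = inverse (zeta e ^ k)))" for k
  proof -
    have "c 1 = \<sigma> 1" "a 1 = b 1" "c 2 = \<sigma> 2" "a 2 = b 2"
      using entries[of 1] entries[of 2] assms(2) by auto
    then show ?thesis
      using wlen_tgen_mult[OF e assms(2) data, of k] by (simp add: w)
  qed
  ultimately show ?thesis
    by blast
qed

end
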